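(* Let $R,S\in\mathfrak{D}$ and $\mathfrak{D}'\subseteq\mathfrak{D}$, and let $$\mathfrak{G}_{\mathfrak{D}'}(R)=\{\mathcal{G}(\xi):\xi\in\mathcal{H}(G,R),\ G\in\mathfrak{D}'\}.$$ If $\#\mathcal{S}(G,R)\le\#\mathcal{S}(G,S)$ for all $G\in\mathfrak{G}_{\mathfrak{D}'}(R)$, then $R\sqsubseteq_\Gamma S$ with respect to $\mathfrak{D}'$.
   Context: **Digraphs and homomorphisms.** - A digraph $G$ is a pair $(V(G),A(G))$, where $V(G)$ is a finite non-empty set and $A(G)\subseteq V(G)\times V(G)$. Arcs are written $vw$. - An arc $vw$ with $v\ne w$ is proper. - A homomorphism $\xi:G\to H$ is a map $V(G)\to V(H)$ with $\xi(v)\xi(w)\in A(H)$ for all $vw\in A(G)$. $\mathcal{H}(G,H)$ is the set of homomorphisms. - A homomorphism is strict if it maps every proper arc to a proper arc. $\mathcal{S}(G,H)$ is the set of strict homomorphisms. - $\mathfrak{D}$ is the class of all digraphs. **Connectivity.** - Two vertices $u,w$ are adjacent if $uw\in A(G)$ or $wu\in A(G)$. - For $X\subseteq V(G)$ and $v,w\in X$, the vertices $v$ and $w$ are connected in $X$ if $v=w$, or if there are $z_0=v,\dots,z_I=w$ in $X$ with consecutive terms adjacent. - $\gamma_X(v)$ is the set of $w\in X$ connected to $v$ in $X$. - $\Gamma_\xi(v):=\gamma_{\xi^{-1}(\xi(v))}(v)$. **The quotient digraph.** For $\xi\in\mathcal{H}(G,H)$, $\mathcal{G}(\xi)$ is the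 digraph with: - vertex set $\{\Gamma_\xi(v):v\in V(G)\}$; - arcs $\mathfrak{a}\mathfrak{b}$ whenever there are $a\in\mathfrak{a}$, $b\in\mathfrak{b}$ with $ab\in A(G)$. **Schemes.** - For a class $\mathfrak{D}'$, let $\mathfrak{D}'_r$ be a fixed system of representatives up to isomorphism. - A Hom-scheme from $R$ to $S$ with respect to $\mathfrak{D}'$ is a family of maps $\rho_G:\mathcal{H}(G,R)\to\mathcal{H}(G,S)$, $G\in\mathfrak{D}'_r$. - It is strong if all $\rho_G$ are injective. - It is a $\Gamma$-scheme if $\Gamma_{\rho_G(\xi)}(v)=\Gamma_\xi(v)$ for all $G$, $\xi$ and $v$. - $R\sqsubseteq_\Gamma S$ with respect to $\mathfrak{D}'$ means that a strong $\Gamma$-scheme exists. *)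

theory Defs
  imports Main "HOL-Library.FuncSet"
begin

type_synonym 'v digraph = "'v set \<times> ('v \<times> 'v) set"

definition verts :: "'v digraph \<Rightarrow> 'v set" where "verts G = fst G"
definition arcs :: "'v digraph \<Rightarrow> ('v \<times> 'v) set" where "arcs G = snd G"

definition digraph :: "'v digraph \<Rightarrow> bool" where
  "digraph G \<longleftrightarrow> finite (verts G) \<and> verts G \<noteq> {} \<and> arcs G \<subseteq> verts G \<times> verts G"

definition homs :: "'v digraph \<Rightarrow> 'w digraph \<Rightarrow> ('v \<Rightarrow> 'w) set" where
  "homs G H = {\<xi> \<in> verts G \<rightarrow>\<^sub>E verts H. \<forall>(v,w) \<in> arcs G. (\<xi> v, \<xi> w) \<in> arcs H}"

definition strict_homs :: "'v digraph \<Rightarrow> 'w digraph \<Rightarrow> ('v \<Rightarrow> 'w) set" where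
  "strict_homs G H = {\<xi> \<in> homs G H. \<forall>(v,w) \<in> arcs G. v \<noteq> w \<longrightarrow> \<xi> v \<noteq> \<xi> w}"

definition adjacent :: "'v digraph \<Rightarrow> 'v \<Rightarrow> 'v \<Rightarrow> bool" where
  "adjacent G u w \<longleftrightarrow> (u,w) \<in> arcs G \<or> (w,u) \<in> arcs G"

definition gamma :: "'v digraph \<Rightarrow> 'v set \<Rightarrow> 'v \<Rightarrow> 'v set" where
  "gamma G X v = {w \<in> X. (v, w) \<in> {(a,b). a \<in> X \<and> b \<in> X \<and> adjacent G a b}\<^sup>*}"

definition Gamma :: "'v digraph \<Rightarrow> ('v \<Rightarrow> 'w) \<Rightarrow> 'v \<Rightarrow> 'v set" where
  "Gamma G \<xi> v = gamma G {u \<in> verts G. \<xi> u = \<xi> v} v"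

definition quot :: "'v digraph \<Rightarrow> ('v \<Rightarrow> 'w) \<Rightarrow> 'v set digraph" where
  "quot G \<xi> = (let W = Gamma G \<xi> ` verts G in
     (W, {(a,b). a \<in> W \<and> b \<in> W \<and> (\<exists>x\<in>a. \<exists>y\<in>b. (x,y) \<in> arcs G)}))"

definition gamma_below :: "'v digraph set \<Rightarrow> 'r digraph \<Rightarrow> 's digraph \<Rightarrow> bool" where
  "gamma_below D' R S \<longleftrightarrow>
     (\<exists>\<rho> :: 'v digraph \<Rightarrow> ('v \<Rightarrow> 'r) \<Rightarrow> ('v \<Rightarrow> 's).
        \<forall>G \<in> D'. \<rho> G \<in> homs G R \<rightarrow> homs G S \<and> inj_on (\<rho> G) (homs G R) \<and>
          (\<forall>\<xi> \<in> homs G R. \<forall>v \<in> verts G. Gamma G (\<rho> G \<xi>) v = Gamma G \<xi> v))"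

end

theory Submission
  imports Defs
begin

text \<open>Group the homomorphisms \<open>G \<rightarrow> R\<close> by their \<open>\<Gamma>\<close>-partition of \<open>V(G)\<close>. The homomorphisms
  \<open>\<zeta> : G \<rightarrow> T\<close> inducing the same partition as \<open>\<xi>\<close> are exactly the lifts \<open>\<eta> \<circ> \<Gamma>\<^sub>\<xi>\<close> of the strict
  homomorphisms \<open>\<eta> : \<G>(\<xi>) \<rightarrow> T\<close>: strictness of \<open>\<eta>\<close> is what keeps adjacent classes apart. Hence
  each class has \<open>#\<S>(\<G>(\<xi>), R)\<close> members on the \<open>R\<close>-side and \<open>#\<S>(\<G>(\<xi>), S)\<close> on the \<open>S\<close>-side,
  and the hypothesis lets us inject every class of \<open>\<H>(G, R)\<close> into the corresponding class
  of \<open>\<H>(G, S)\<close>; the union of these injections is the required strong \<open>\<Gamma>\<close>-scheme.\<close>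

lemma gamma_subset: "gamma G X v \<subseteq> X"
  by (auto simp: gamma_def)

lemma gamma_self: "v \<in> X \<Longrightarrow> v \<in> gamma G X v"
  by (auto simp: gamma_def)

lemma gamma_eq:
  assumes "v \<in> X" "w \<in> gamma G X v"
  shows "gamma G X w = gamma G X v"
proof -
  let ?E = "{(a,b). a \<in> X \<and> b \<in> X \<and> adjacent G a b}"
  have sym: "?E\<inverse> = ?E" by (auto simp: adjacent_def)
  have vw: "(v,w) \<in> ?E\<^sup>*" using assms by (auto simp: gamma_def)
  then have "(w,v) \<in> (?E\<inverse>)\<^sup>*" by (simp add: rtrancl_converse)
  then have "(w,v) \<in> ?E\<^sup>*" by (simp only: sym)
  with vw show ?thesis unfolding gamma_def by (auto intro: rtrancl_trans)
qed

lemma gamma_eq_if_adjacent: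
  assumes "a \<in> X" "b \<in> X" "adjacent G a b"
  shows "gamma G X a = gamma G X b"
proof -
  have "b \<in> gamma G X a" using assms by (auto simp: gamma_def)
  then show ?thesis using gamma_eq[OF assms(1)] by simp
qed

lemma gamma_subset_gamma:
  assumes "gamma G X v \<subseteq> Y"
  shows "gamma G X v \<subseteq> gamma G Y v"
proof
  let ?E = "\<lambda>X. {(a,b). a \<in> X \<and> b \<in> X \<and> adjacent G a b}"
  fix w assume w: "w \<in> gamma G X v"
  have "(v,w) \<in> (?E X)\<^sup>*" using w by (simp add: gamma_def)
  then have "(v,w) \<in> (?E Y)\<^sup>*"
  proof (induction rule: rtrancl_induct)
    case (step y z)
    then have "y \<in> gamma G X v" "z \<in> gamma G X v"
      by (auto simp: gamma_def intro: rtrancl_into_rtrancl)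
    with step assms have "(y,z) \<in> ?E Y" by auto
    with step.IH show ?case by (rule rtrancl_into_rtrancl)
  qed simp
  with w assms show "w \<in> gamma G Y v" by (auto simp: gamma_def)
qed

lemma gamma_subset_closed:
  assumes "v \<in> C" and closed: "\<And>x y. x \<in> C \<Longrightarrow> x \<in> X \<Longrightarrow> y \<in> X \<Longrightarrow> adjacent G x y \<Longrightarrow> y \<in> C"
  shows "gamma G X v \<subseteq> C"
proof
  fix w assume "w \<in> gamma G X v"
  then have "(v,w) \<in> {(a,b). a \<in> X \<and> b \<in> X \<and> adjacent G a b}\<^sup>*" by (simp add: gamma_def)
  then show "w \<in> C" by induction (use assms in auto)
qed

lemma Gamma_self: "v \<in> verts G \<Longrightarrow> v \<in> Gamma G \<xi> v"
  unfolding Gamma_def by (rule gamma_self) simp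

lemma Gamma_memD: "x \<in> Gamma G \<xi> v \<Longrightarrow> x \<in> verts G \<and> \<xi> x = \<xi> v"
  unfolding Gamma_def using gamma_subset by fastforce

lemma Gamma_eq:
  assumes "v \<in> verts G" "x \<in> Gamma G \<xi> v"
  shows "Gamma G \<xi> x = Gamma G \<xi> v"
proof -
  have "\<xi> x = \<xi> v" using Gamma_memD[OF assms(2)] by blast
  then show ?thesis
    using gamma_eq[of v "{u \<in> verts G. \<xi> u = \<xi> v}" x G] assms by (simp add: Gamma_def)
qed

lemma Gamma_eq_if_adjacent:
  assumes "x \<in> verts G" "y \<in> verts G" "adjacent G x y" "\<xi> x = \<xi> y"
  shows "Gamma G \<xi> x = Gamma G \<xi> y"
  unfolding Gamma_def using assms gamma_eq_if_adjacent[of x "{u \<in> verts G. \<xi> u = \<xi> y}" y G]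
  by simp

lemma Gamma_eq_if_constant_and_separating:
  assumes v: "v \<in> verts G"
    and const: "\<And>v x. v \<in> verts G \<Longrightarrow> x \<in> Gamma G \<xi> v \<Longrightarrow> \<zeta> x = \<zeta> v"
    and separating: "\<And>x y. x \<in> verts G \<Longrightarrow> y \<in> verts G \<Longrightarrow> adjacent G x y \<Longrightarrow>
      Gamma G \<xi> x \<noteq> Gamma G \<xi> y \<Longrightarrow> \<zeta> x \<noteq> \<zeta> y"
  shows "Gamma G \<zeta> v = Gamma G \<xi> v"
proof
  have "Gamma G \<xi> v \<subseteq> {u \<in> verts G. \<zeta> u = \<zeta> v}"
  proof
    fix x assume "x \<in> Gamma G \<xi> v"
    then show "x \<in> {u \<in> verts G. \<zeta> u = \<zeta> v}"
      using const[OF v] Gamma_memD[of x G \<xi> v] by simp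
  qed
  then have "gamma G {u \<in> verts G. \<xi> u = \<xi> v} v \<subseteq> {u \<in> verts G. \<zeta> u = \<zeta> v}"
    by (simp add: Gamma_def)
  then show "Gamma G \<xi> v \<subseteq> Gamma G \<zeta> v"
    unfolding Gamma_def by (rule gamma_subset_gamma)
  have "gamma G {u \<in> verts G. \<zeta> u = \<zeta> v} v \<subseteq> {w \<in> verts G. Gamma G \<xi> w = Gamma G \<xi> v}"
  proof (rule gamma_subset_closed)
    show "v \<in> {w \<in> verts G. Gamma G \<xi> w = Gamma G \<xi> v}" using v by simp
    fix x y
    assume "x \<in> {w \<in> verts G. Gamma G \<xi> w = Gamma G \<xi> v}" "x \<in> {u \<in> verts G. \<zeta> u = \<zeta> v}"
      "y \<in> {u \<in> verts G. \<zeta> u = \<zeta> v}" "adjacent G x y"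
    then have "x \<in> verts G" "y \<in> verts G" "\<zeta> x = \<zeta> y" "Gamma G \<xi> x = Gamma G \<xi> v"
      by simp_all
    moreover have "Gamma G \<xi> x = Gamma G \<xi> y"
      using separating[of x y] \<open>adjacent G x y\<close> calculation by blast
    ultimately show "y \<in> {w \<in> verts G. Gamma G \<xi> w = Gamma G \<xi> v}"
      by simp
  qed
  then show "Gamma G \<zeta> v \<subseteq> Gamma G \<xi> v"
    unfolding Gamma_def[of G \<zeta>] by (auto dest: Gamma_self[of _ G \<xi>])
qed

lemma digraph_arcsD: "digraph G \<Longrightarrow> (x,y) \<in> arcs G \<Longrightarrow> x \<in> verts G \<and> y \<in> verts G"
  by (auto simp: digraph_def)

lemma verts_quot: "verts (quot G \<xi>) = Gamma G \<xi> ` verts G"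
  by (simp add: quot_def verts_def Let_def)

lemma arcs_quot:
  assumes "digraph G"
  shows "arcs (quot G \<xi>) = (\<lambda>(x,y). (Gamma G \<xi> x, Gamma G \<xi> y)) ` arcs G"
proof -
  have quot_arcs: "arcs (quot G \<xi>) = {(a,b). a \<in> Gamma G \<xi> ` verts G \<and> b \<in> Gamma G \<xi> ` verts G \<and>
      (\<exists>x\<in>a. \<exists>y\<in>b. (x,y) \<in> arcs G)}"
    by (simp add: quot_def arcs_def Let_def)
  show ?thesis
  proof (intro equalityI subsetI)
    fix ab assume "ab \<in> arcs (quot G \<xi>)"
    then obtain v w x y where ab: "ab = (Gamma G \<xi> v, Gamma G \<xi> w)" "v \<in> verts G" "w \<in> verts G"
      "x \<in> Gamma G \<xi> v" "y \<in> Gamma G \<xi> w" "(x,y) \<in> arcs G"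
      unfolding quot_arcs by blast
    have "Gamma G \<xi> x = Gamma G \<xi> v" "Gamma G \<xi> y = Gamma G \<xi> w"
      using Gamma_eq[OF ab(2,4)] Gamma_eq[OF ab(3,5)] .
    with ab show "ab \<in> (\<lambda>(x,y). (Gamma G \<xi> x, Gamma G \<xi> y)) ` arcs G"
      by (metis (no_types, lifting) case_prod_conv image_eqI)
  next
    fix ab assume "ab \<in> (\<lambda>(x,y). (Gamma G \<xi> x, Gamma G \<xi> y)) ` arcs G"
    then obtain x y where "ab = (Gamma G \<xi> x, Gamma G \<xi> y)" "(x,y) \<in> arcs G"
      by auto
    with digraph_arcsD[OF assms] show "ab \<in> arcs (quot G \<xi>)"
      unfolding quot_arcs by (blast intro: Gamma_self)
  qed
qed

lemma arc_quotI: "digraph G \<Longrightarrow> (x,y) \<in> arcs G \<Longrightarrow> (Gamma G \<xi> x, Gamma G \<xi> y) \<in> arcs (quot G \<xi>)"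
  unfolding arcs_quot by (rule image_eqI[where x = "(x,y)"]) simp_all

lemma finite_homs: "digraph G \<Longrightarrow> digraph H \<Longrightarrow> finite (homs G H)"
  by (rule rev_finite_subset[of "verts G \<rightarrow>\<^sub>E verts H"])
    (auto simp: digraph_def homs_def finite_PiE)

definition homs_with_Gamma :: "'v digraph \<Rightarrow> 'w digraph \<Rightarrow> ('v \<Rightarrow> 'u) \<Rightarrow> ('v \<Rightarrow> 'w) set" where
  "homs_with_Gamma G T \<xi> = {\<zeta> \<in> homs G T. \<forall>v\<in>verts G. Gamma G \<zeta> v = Gamma G \<xi> v}"

lemma restrict_eq_restrict_iff: "restrict f A = restrict g A \<longleftrightarrow> (\<forall>x\<in>A. f x = g x)"
  by (metis restrict_apply' restrict_ext)

lemma homs_with_Gamma_eq: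
  "homs_with_Gamma G T \<xi> = {\<zeta> \<in> homs G T. restrict (Gamma G \<zeta>) (verts G) = restrict (Gamma G \<xi>) (verts G)}"
  by (simp add: homs_with_Gamma_def restrict_eq_restrict_iff)

definition quot_lift :: "'v digraph \<Rightarrow> ('v \<Rightarrow> 'u) \<Rightarrow> ('v set \<Rightarrow> 'w) \<Rightarrow> 'v \<Rightarrow> 'w" where
  "quot_lift G \<xi> \<eta> = (\<lambda>v\<in>verts G. \<eta> (Gamma G \<xi> v))"

definition quot_descend :: "'v digraph \<Rightarrow> ('v \<Rightarrow> 'u) \<Rightarrow> ('v \<Rightarrow> 'w) \<Rightarrow> 'v set \<Rightarrow> 'w" where
  "quot_descend G \<xi> \<zeta> = (\<lambda>a\<in>verts (quot G \<xi>). \<zeta> (SOME x. x \<in> a))"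

lemma quot_descend_Gamma:
  assumes "\<zeta> \<in> homs_with_Gamma G T \<xi>" "v \<in> verts G"
  shows "quot_descend G \<xi> \<zeta> (Gamma G \<xi> v) = \<zeta> v"
proof -
  have "(SOME x. x \<in> Gamma G \<xi> v) \<in> Gamma G \<xi> v"
    using Gamma_self[OF assms(2)] by (rule someI)
  then have "(SOME x. x \<in> Gamma G \<xi> v) \<in> Gamma G \<zeta> v"
    using assms by (simp add: homs_with_Gamma_def)
  then have "\<zeta> (SOME x. x \<in> Gamma G \<xi> v) = \<zeta> v"
    by (rule Gamma_memD[THEN conjunct2])
  with assms(2) show ?thesis
    by (simp add: quot_descend_def verts_quot)
qed

lemma quot_lift_in_homs_with_Gamma:
  assumes G: "digraph G" and \<eta>: "\<eta> \<in> strict_homs (quot G \<xi>) T"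
  shows "quot_lift G \<xi> \<eta> \<in> homs_with_Gamma G T \<xi>"
proof -
  let ?\<zeta> = "quot_lift G \<xi> \<eta>"
  have \<eta>_ext: "\<eta> \<in> Gamma G \<xi> ` verts G \<rightarrow>\<^sub>E verts T"
    using \<eta> by (simp add: strict_homs_def homs_def verts_quot)
  have \<eta>_arcs: "(\<eta> (Gamma G \<xi> x), \<eta> (Gamma G \<xi> y)) \<in> arcs T \<and>
      (Gamma G \<xi> x \<noteq> Gamma G \<xi> y \<longrightarrow> \<eta> (Gamma G \<xi> x) \<noteq> \<eta> (Gamma G \<xi> y))"
    if "(x,y) \<in> arcs G" for x y
    using \<eta> arc_quotI[OF G that] unfolding strict_homs_def homs_def by blast
  have "?\<zeta> \<in> verts G \<rightarrow>\<^sub>E verts T"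
    using \<eta>_ext by (auto simp: quot_lift_def)
  moreover have "(?\<zeta> x, ?\<zeta> y) \<in> arcs T" if "(x,y) \<in> arcs G" for x y
    using \<eta>_arcs[OF that] digraph_arcsD[OF G that] by (simp add: quot_lift_def)
  ultimately have "?\<zeta> \<in> homs G T"
    by (auto simp: homs_def)
  moreover have "Gamma G ?\<zeta> v = Gamma G \<xi> v" if "v \<in> verts G" for v
  proof (rule Gamma_eq_if_constant_and_separating[OF that])
    show "?\<zeta> x = ?\<zeta> v" if "v \<in> verts G" "x \<in> Gamma G \<xi> v" for v x
    proof -
      have "x \<in> verts G" "Gamma G \<xi> x = Gamma G \<xi> v"
        using Gamma_memD[OF that(2)] Gamma_eq[OF that] by simp_all
      with that(1) show ?thesis by (simp add: quot_lift_def)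
    qed
    show "?\<zeta> x \<noteq> ?\<zeta> y" if "x \<in> verts G" "y \<in> verts G" "adjacent G x y"
      "Gamma G \<xi> x \<noteq> Gamma G \<xi> y" for x y
      using that \<eta>_arcs[of x y] \<eta>_arcs[of y x] by (auto simp: adjacent_def quot_lift_def)
  qed
  ultimately show ?thesis by (simp add: homs_with_Gamma_def)
qed

lemma quot_descend_in_strict_homs:
  assumes G: "digraph G" and \<zeta>: "\<zeta> \<in> homs_with_Gamma G T \<xi>"
  shows "quot_descend G \<xi> \<zeta> \<in> strict_homs (quot G \<xi>) T"
proof -
  let ?\<eta> = "quot_descend G \<xi> \<zeta>"
  have \<zeta>_hom: "\<zeta> \<in> homs G T" and \<zeta>_Gamma: "\<And>v. v \<in> verts G \<Longrightarrow> Gamma G \<zeta> v = Gamma G \<xi> v"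
    using \<zeta> by (auto simp: homs_with_Gamma_def)
  have "?\<eta> \<in> verts (quot G \<xi>) \<rightarrow>\<^sub>E verts T"
  proof (rule PiE_I)
    show "?\<eta> a \<in> verts T" if "a \<in> verts (quot G \<xi>)" for a
      using that \<zeta>_hom quot_descend_Gamma[OF \<zeta>] by (auto simp: verts_quot homs_def)
    show "?\<eta> a = undefined" if "a \<notin> verts (quot G \<xi>)" for a
      using that by (simp add: quot_descend_def)
  qed
  moreover have "(?\<eta> (Gamma G \<xi> x), ?\<eta> (Gamma G \<xi> y)) \<in> arcs T \<and>
      (Gamma G \<xi> x \<noteq> Gamma G \<xi> y \<longrightarrow> ?\<eta> (Gamma G \<xi> x) \<noteq> ?\<eta> (Gamma G \<xi> y))"
    if xy: "(x,y) \<in> arcs G" for x y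
  proof -
    have V: "x \<in> verts G" "y \<in> verts G" using digraph_arcsD[OF G xy] by simp_all
    have "\<zeta> x = \<zeta> y \<Longrightarrow> Gamma G \<xi> x = Gamma G \<xi> y"
      using Gamma_eq_if_adjacent[OF V _ , of \<zeta>] \<zeta>_Gamma V xy by (auto simp: adjacent_def)
    then show ?thesis
      using \<zeta>_hom xy V by (auto simp: quot_descend_Gamma[OF \<zeta>] homs_def)
  qed
  ultimately show ?thesis
    by (auto simp: strict_homs_def homs_def arcs_quot[OF G])
qed

lemma bij_betw_quot_lift:
  assumes G: "digraph G"
  shows "bij_betw (quot_lift G \<xi>) (strict_homs (quot G \<xi>) T) (homs_with_Gamma G T \<xi>)"
proof (intro bij_betw_byWitness[where f' = "quot_descend G \<xi>"] ballI)
  show "quot_descend G \<xi> (quot_lift G \<xi> \<eta>) = \<eta>" if \<eta>: "\<eta> \<in> strict_homs (quot G \<xi>) T" for \<eta>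
  proof (rule PiE_ext)
    have lift: "quot_lift G \<xi> \<eta> \<in> homs_with_Gamma G T \<xi>"
      using quot_lift_in_homs_with_Gamma[OF G \<eta>] .
    show "\<eta> \<in> verts (quot G \<xi>) \<rightarrow>\<^sub>E verts T"
      using \<eta> by (simp add: strict_homs_def homs_def)
    show "quot_descend G \<xi> (quot_lift G \<xi> \<eta>) \<in> verts (quot G \<xi>) \<rightarrow>\<^sub>E verts T"
      using quot_descend_in_strict_homs[OF G lift] by (simp add: strict_homs_def homs_def)
    show "quot_descend G \<xi> (quot_lift G \<xi> \<eta>) a = \<eta> a" if a: "a \<in> verts (quot G \<xi>)" for a
    proof -
      obtain v where "v \<in> verts G" "a = Gamma G \<xi> v"
        using a by (auto simp: verts_quot)
      then show ?thesis
        using quot_descend_Gamma[OF lift] by (simp add: quot_lift_def)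
    qed
  qed
  show "quot_lift G \<xi> (quot_descend G \<xi> \<zeta>) = \<zeta>" if \<zeta>: "\<zeta> \<in> homs_with_Gamma G T \<xi>" for \<zeta>
  proof (rule PiE_ext)
    show \<zeta>_ext: "\<zeta> \<in> verts G \<rightarrow>\<^sub>E verts T"
      using \<zeta> by (simp add: homs_with_Gamma_def homs_def)
    show "quot_lift G \<xi> (quot_descend G \<xi> \<zeta>) v = \<zeta> v" if "v \<in> verts G" for v
      using that quot_descend_Gamma[OF \<zeta>] by (simp add: quot_lift_def)
    then show "quot_lift G \<xi> (quot_descend G \<xi> \<zeta>) \<in> verts G \<rightarrow>\<^sub>E verts T"
      using \<zeta>_ext by (auto simp: quot_lift_def)
  qed
  show "quot_lift G \<xi> ` strict_homs (quot G \<xi>) T \<subseteq> homs_with_Gamma G T \<xi>"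
    using quot_lift_in_homs_with_Gamma[OF G] by blast
  show "quot_descend G \<xi> ` homs_with_Gamma G T \<xi> \<subseteq> strict_homs (quot G \<xi>) T"
    using quot_descend_in_strict_homs[OF G] by blast
qed

lemma card_homs_with_Gamma:
  "digraph G \<Longrightarrow> card (homs_with_Gamma G T \<xi>) = card (strict_homs (quot G \<xi>) T)"
  by (metis bij_betw_same_card bij_betw_quot_lift)

lemma ex_inj_on_preserving_key:
  assumes "finite A" "finite B"
    and le: "\<And>a. a \<in> A \<Longrightarrow> card {x \<in> A. f x = f a} \<le> card {y \<in> B. g y = f a}"
  shows "\<exists>h. h \<in> A \<rightarrow> B \<and> inj_on h A \<and> (\<forall>a\<in>A. g (h a) = f a)"
proof -
  have "\<forall>k\<in>f ` A. \<exists>h. h ` {x \<in> A. f x = k} \<subseteq> {y \<in> B. g y = k} \<and> inj_on h {x \<in> A. f x = k}"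
  proof (intro ballI card_le_inj)
    fix k assume k: "k \<in> f ` A"
    show "finite {x \<in> A. f x = k}" "finite {y \<in> B. g y = k}"
      using assms(1,2) by simp_all
    from k obtain a where "a \<in> A" "k = f a" by blast
    then show "card {x \<in> A. f x = k} \<le> card {y \<in> B. g y = k}"
      using le by simp
  qed
  then obtain H where H: "\<forall>k\<in>f ` A.
      H k ` {x \<in> A. f x = k} \<subseteq> {y \<in> B. g y = k} \<and> inj_on (H k) {x \<in> A. f x = k}"
    by (rule bchoice[THEN exE])
  define h where "h a = H (f a) a" for a
  have h_key: "h a \<in> B \<and> g (h a) = f a" if "a \<in> A" for a
  proof -
    have "H (f a) ` {x \<in> A. f x = f a} \<subseteq> {y \<in> B. g y = f a}"
      using H that by blast
    then show ?thesis using that by (auto simp: h_def)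
  qed
  have "inj_on h A"
  proof (rule inj_onI)
    fix a a' assume a: "a \<in> A" "a' \<in> A" "h a = h a'"
    then have "f a = f a'" using h_key by metis
    moreover have "inj_on (H (f a)) {x \<in> A. f x = f a}"
      using H a(1) by blast
    ultimately show "a = a'"
      using a by (auto simp: h_def dest: inj_onD)
  qed
  with h_key show ?thesis by blast
qed

theorem lemma4:
  fixes R :: "'r digraph" and S :: "'s digraph" and D' :: "'v digraph set"
  assumes "digraph R" and "digraph S"
    and "\<forall>G \<in> D'. digraph G"
    and "\<forall>Q \<in> {quot G \<xi> | G \<xi>. G \<in> D' \<and> \<xi> \<in> homs G R}.
           card (strict_homs Q R) \<le> card (strict_homs Q S)"
  shows "gamma_below D' R S"
proof -
  let ?partition = "\<lambda>G \<zeta>. restrict (Gamma G \<zeta>) (verts G)"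
  have "\<forall>G\<in>D'. \<exists>h. h \<in> homs G R \<rightarrow> homs G S \<and> inj_on h (homs G R) \<and>
      (\<forall>\<xi>\<in>homs G R. ?partition G (h \<xi>) = ?partition G \<xi>)"
  proof (intro ballI ex_inj_on_preserving_key)
    fix G assume G: "G \<in> D'"
    have "digraph G" using G assms(3) by blast
    then show "finite (homs G R)" "finite (homs G S)"
      using assms(1,2) by (simp_all add: finite_homs)
    show "card {\<zeta> \<in> homs G R. ?partition G \<zeta> = ?partition G \<xi>}
        \<le> card {\<zeta> \<in> homs G S. ?partition G \<zeta> = ?partition G \<xi>}" if "\<xi> \<in> homs G R" for \<xi>
    proof -
      have "card (strict_homs (quot G \<xi>) R) \<le> card (strict_homs (quot G \<xi>) S)"
        using assms(4) G that by blast
      then show ?thesis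
        by (simp add: homs_with_Gamma_eq[symmetric] card_homs_with_Gamma[OF \<open>digraph G\<close>])
    qed
  qed
  then obtain \<rho> where "\<forall>G\<in>D'. \<rho> G \<in> homs G R \<rightarrow> homs G S \<and> inj_on (\<rho> G) (homs G R) \<and>
      (\<forall>\<xi>\<in>homs G R. ?partition G (\<rho> G \<xi>) = ?partition G \<xi>)"
    by (rule bchoice[THEN exE])
  then show ?thesis
    unfolding gamma_below_def restrict_eq_restrict_iff by blast
qed

end
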